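(* Under the standing setup, the Nisio semigroup $\mathscr S=(\mathscr S(t))_{t\ge0}$ of $(\mathcal P,f)$ is a semigroup of convex kernels on $\mathbb R^d$; in particular $\mathscr S(0)=I$ and $\mathscr S(s+t)=\mathscr S(s)\mathscr S(t)$ for all $s,t\ge0$. Moreover, $\mathscr S$ coincides with the semigroup envelope of $(\mathcal P,f)$.
   Context: Standing setup: $d\in\mathbb N$; vectors in $\mathbb R^d$; inequalities and suprema of vectors are componentwise; reals are identified with constant vectors. A $Q$-matrix is $q\in\mathbb R^{d\times d}$ with $q_{ii}\le0$, $q_{ij}\ge0$ ($i\ne j$), $\sum_jq_{ij}=0$. Let $\mathcal P$ be a set of $Q$-matrices and $f=(f_q)_{q\in\mathcal P}\subset\mathbb R^d$ with $\sup_{q\in\mathcal P}f_q=f_{q_0}=0$ for some $q_0\in\mathcal P$, such that $\mathcal Qu:=\sup_{q\in\mathcal P}(qu+f_q)$ is finite for every $u\in\mathbb R^d$. For $q\in\mathcal P$, $t\ge0$: $S_q(t)u_0:=e^{tq}u_0+\int_0^te^{sq}f_q\,ds$. For $h\ge0$: $\mathcal E_hu_0:=\sup_{q\in\mathcal P}S_q(h)u_0$. $P$ is the set of finite subsets $\pi\subset[0,\infty)$ with $0\in\pi$; $P_t:=\{\pi\in P:\max\pi=t\}$. For $\pi=\{t_0,\dots,t_m\}$ with $0=t_0<\dots<t_m$, $m\ge1$, $\mathcal E_\pi:=\mathcal E_{t_1-t_0}\circ\cdots\circ\mathcal E_{t_m-t_{m-1}}$, and $\mathcal E_{\{0\}}:=\mathcal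 E_0$. The Nisio semigroup of $(\mathcal P,f)$ is $\mathscr S(t)u_0:=\sup_{\pi\in P_t}\mathcal E_\pi u_0$. A kernel is a map $\mathbb R^d\to\mathbb R^d$ that is monotone (componentwise order) and maps each constant vector $\alpha$ to $\alpha$; convex means each component is convex. A semigroup is a family $(\mathscr T(t))_{t\ge0}$ of maps $\mathbb R^d\to\mathbb R^d$ with $\mathscr T(0)=I$ and $\mathscr T(s+t)=\mathscr T(s)\circ\mathscr T(t)$. The semigroup envelope of $(\mathcal P,f)$ is the semigroup $\mathscr T$ with $\mathscr T(t)u_0\ge S_q(t)u_0$ for all $t\ge0,u_0,q\in\mathcal P$, which is below (componentwise, for all $t,u_0$) every other semigroup with this domination property. *)

theory Defs
  imports "HOL-Analysis.Analysis"
begin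

text \<open>Vectors in R^d are modelled as real^'n (d = CARD('n)); d x d matrices as real^'n^'n.
  The order on real^'n is the library's componentwise order.\<close>

definition is_Q_matrix :: "real^'n^'n \<Rightarrow> bool" where
  "is_Q_matrix q \<longleftrightarrow> (\<forall>i. q $ i $ i \<le> 0) \<and> (\<forall>i j. i \<noteq> j \<longrightarrow> q $ i $ j \<ge> 0)
     \<and> (\<forall>i. (\<Sum>j\<in>UNIV. q $ i $ j) = 0)"

definition vsup :: "(real^'n) set \<Rightarrow> real^'n" where
  "vsup A = (\<chi> i. SUP v\<in>A. v $ i)"

primrec mpow :: "real^'n^'n \<Rightarrow> nat \<Rightarrow> real^'n^'n" where
  "mpow A 0 = mat 1"
| "mpow A (Suc k) = A ** mpow A k"

definition mexp :: "real^'n^'n \<Rightarrow> real^'n^'n" where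
  "mexp A = (\<Sum>k. (1 / fact k) *\<^sub>R mpow A k)"

definition Sq :: "(real^'n^'n \<Rightarrow> real^'n) \<Rightarrow> real^'n^'n \<Rightarrow> real \<Rightarrow> real^'n \<Rightarrow> real^'n" where
  "Sq f q t u0 = mexp (t *\<^sub>R q) *v u0 + integral {0..t} (\<lambda>s. mexp (s *\<^sub>R q) *v f q)"

definition Eh :: "(real^'n^'n) set \<Rightarrow> (real^'n^'n \<Rightarrow> real^'n) \<Rightarrow> real \<Rightarrow> real^'n \<Rightarrow> real^'n" where
  "Eh P f h u0 = vsup ((\<lambda>q. Sq f q h u0) ` P)"

fun Ecomp :: "(real^'n^'n) set \<Rightarrow> (real^'n^'n \<Rightarrow> real^'n) \<Rightarrow> real list \<Rightarrow> real^'n \<Rightarrow> real^'n" where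
  "Ecomp P f (x # y # rest) = Eh P f (y - x) \<circ> Ecomp P f (y # rest)"
| "Ecomp P f _ = id"

definition partitions :: "real \<Rightarrow> real set set" where
  "partitions t = {\<pi>. finite \<pi> \<and> \<pi> \<subseteq> {0..} \<and> 0 \<in> \<pi> \<and> Max \<pi> = t}"

definition Epi :: "(real^'n^'n) set \<Rightarrow> (real^'n^'n \<Rightarrow> real^'n) \<Rightarrow> real set \<Rightarrow> real^'n \<Rightarrow> real^'n" where
  "Epi P f \<pi> = (if \<pi> = {0} then Eh P f 0 else Ecomp P f (sorted_list_of_set \<pi>))"

definition nisio :: "(real^'n^'n) set \<Rightarrow> (real^'n^'n \<Rightarrow> real^'n) \<Rightarrow> real \<Rightarrow> real^'n \<Rightarrow> real^'n" where
  "nisio P f t u0 = vsup ((\<lambda>\<pi>. Epi P f \<pi> u0) ` partitions t)"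

definition is_kernel :: "(real^'n \<Rightarrow> real^'n) \<Rightarrow> bool" where
  "is_kernel T \<longleftrightarrow> (\<forall>u v. u \<le> v \<longrightarrow> T u \<le> T v) \<and> (\<forall>\<alpha>. T (vec \<alpha>) = vec \<alpha>)"

definition is_convex_map :: "(real^'n \<Rightarrow> real^'n) \<Rightarrow> bool" where
  "is_convex_map T \<longleftrightarrow> (\<forall>i. convex_on UNIV (\<lambda>u. T u $ i))"

definition is_semigroup :: "(real \<Rightarrow> real^'n \<Rightarrow> real^'n) \<Rightarrow> bool" where
  "is_semigroup T \<longleftrightarrow> T 0 = id \<and> (\<forall>s t. s \<ge> 0 \<longrightarrow> t \<ge> 0 \<longrightarrow> T (s + t) = T s \<circ> T t)"

definition dominates :: "(real^'n^'n) set \<Rightarrow> (real^'n^'n \<Rightarrow> real^'n) \<Rightarrow> (real \<Rightarrow> real^'n \<Rightarrow> real^'n) \<Rightarrow> bool" where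
  "dominates P f T \<longleftrightarrow> (\<forall>t u0 q. t \<ge> 0 \<longrightarrow> q \<in> P \<longrightarrow> T t u0 \<ge> Sq f q t u0)"

definition is_semigroup_envelope :: "(real^'n^'n) set \<Rightarrow> (real^'n^'n \<Rightarrow> real^'n) \<Rightarrow> (real \<Rightarrow> real^'n \<Rightarrow> real^'n) \<Rightarrow> bool" where
  "is_semigroup_envelope P f T \<longleftrightarrow> is_semigroup T \<and> dominates P f T \<and>
     (\<forall>T'. is_semigroup T' \<and> dominates P f T' \<longrightarrow> (\<forall>t u0. t \<ge> 0 \<longrightarrow> T t u0 \<le> T' t u0))"

end

theory Submission
  imports Defs
begin

text \<open>Each S_q is an affine semigroup of monotone maps: e^{tq} is entrywise nonnegative and
  fixes constants, and f_q \<le> 0 makes S_q(t) push constants down. Hence every E_h is a convex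
  kernel, and E_{a+b} \<le> E_a E_b, so that E_\<pi> grows under refinement of \<pi>. The supremum
  defining S(s+t) may therefore be taken over partitions containing s, which split into a
  partition of [0,s] followed by a shifted partition of [0,t]; this gives S(s+t) \<le> S(s)S(t).
  Conversely, S(t) is approximated within \<epsilon> by a single E_\<pi> (a common refinement of one
  partition per coordinate), and the shift invariance E_\<pi>(u + c) = E_\<pi> u + c carries the
  error through S(s). Minimality is immediate: a dominating semigroup T satisfies E_h \<le> T(h),
  hence E_\<pi> \<le> T(t) for every partition \<pi> of [0,t].\<close>

section \<open>Matrix exponentials in a Banach algebra of endomorphisms\<close>

text \<open>The library's bounded linear maps carry no multiplication; this copy of them is a Banach
  algebra under composition, so that exp and its laws become available for matrices.\<close>

typedef (overloaded) ('n::finite) endo = "UNIV :: ((real^'n) \<Rightarrow>\<^sub>L (real^'n)) set"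
  by auto

setup_lifting type_definition_endo

instantiation endo :: (finite) real_normed_vector
begin
lift_definition norm_endo :: "'a endo \<Rightarrow> real" is norm .
lift_definition minus_endo :: "'a endo \<Rightarrow> 'a endo \<Rightarrow> 'a endo" is "(-)" .
lift_definition plus_endo :: "'a endo \<Rightarrow> 'a endo \<Rightarrow> 'a endo" is "(+)" .
lift_definition uminus_endo :: "'a endo \<Rightarrow> 'a endo" is "uminus" .
lift_definition zero_endo :: "'a endo" is "0" .
lift_definition scaleR_endo :: "real \<Rightarrow> 'a endo \<Rightarrow> 'a endo" is "scaleR" .
definition dist_endo :: "'a endo \<Rightarrow> 'a endo \<Rightarrow> real" where "dist_endo a b = norm (a - b)"
definition uniformity_endo :: "('a endo \<times> 'a endo) filter" where
  "uniformity_endo = (INF e\<in>{0 <..}. principal {(x, y). dist x y < e})"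
definition open_endo :: "'a endo set \<Rightarrow> bool"
  where "open_endo S = (\<forall>x\<in>S. \<forall>\<^sub>F (x', y) in uniformity. x' = x \<longrightarrow> y \<in> S)"
definition sgn_endo :: "'a endo \<Rightarrow> 'a endo"
  where "sgn_endo x = scaleR (inverse (norm x)) x"
instance
  apply standard
  unfolding dist_endo_def open_endo_def sgn_endo_def uniformity_endo_def
  apply (rule refl | (transfer, force simp: algebra_simps norm_triangle_ineq))+
  done
end

instance endo :: (finite) banach
proof
  fix X :: "nat \<Rightarrow> 'a endo"
  assume "Cauchy X"
  hence "Cauchy (\<lambda>n. Rep_endo (X n))"
    unfolding Cauchy_def dist_norm by transfer
  then obtain L where "(\<lambda>n. Rep_endo (X n)) \<longlonglongrightarrow> L"
    using Cauchy_convergent_iff convergent_def by blast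
  hence "X \<longlonglongrightarrow> Abs_endo L"
    unfolding LIMSEQ_def dist_norm by transfer
  thus "convergent X" unfolding convergent_def by blast
qed

instantiation endo :: (finite) real_normed_algebra_1
begin
lift_definition times_endo :: "'a endo \<Rightarrow> 'a endo \<Rightarrow> 'a endo" is "blinfun_compose" .
lift_definition one_endo :: "'a endo" is "id_blinfun" .
instance
  apply standard
  apply (transfer; rule blinfun_eqI; simp add: blinfun.bilinear_simps)+
    apply (transfer, metis norm_blinfun_id norm_zero zero_neq_one)
   apply (transfer, rule norm_blinfun_compose)
  apply (transfer, simp)
  done
end

definition endo_apply :: "'n::finite endo \<Rightarrow> real^'n \<Rightarrow> real^'n" where
  "endo_apply X v = blinfun_apply (Rep_endo X) v"

definition endo_of_matrix :: "real^'n^'n \<Rightarrow> 'n::finite endo" where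
  "endo_of_matrix A = Abs_endo (Blinfun (\<lambda>v. A *v v))"

definition matrix_of_endo :: "'n::finite endo \<Rightarrow> real^'n^'n" where
  "matrix_of_endo X = matrix (endo_apply X)"

lemma endo_apply_endo_of_matrix [simp]: "endo_apply (endo_of_matrix A) v = A *v v"
proof -
  have "bounded_linear ((*v) A)"
    using matrix_vector_mul_linear linear_conv_bounded_linear by blast
  thus ?thesis
    by (simp add: endo_apply_def endo_of_matrix_def Abs_endo_inverse bounded_linear_Blinfun_apply)
qed

lemma endo_apply_mult [simp]: "endo_apply (X * Y) v = endo_apply X (endo_apply Y v)"
  by (simp add: endo_apply_def times_endo.rep_eq)

lemma endo_apply_one [simp]: "endo_apply 1 v = v"
  by (simp add: endo_apply_def one_endo.rep_eq)

lemma endo_apply_add [simp]: "endo_apply (X + Y) v = endo_apply X v + endo_apply Y v"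
  by (simp add: endo_apply_def plus_endo.rep_eq blinfun.add_left)

lemma endo_apply_scaleR [simp]: "endo_apply (c *\<^sub>R X) v = c *\<^sub>R endo_apply X v"
  by (simp add: endo_apply_def scaleR_endo.rep_eq blinfun.scaleR_left)

lemma endo_apply_linear_simps [simp]:
  "endo_apply X 0 = 0"
  "endo_apply X (c *\<^sub>R v) = c *\<^sub>R endo_apply X v"
  "endo_apply X (u + v) = endo_apply X u + endo_apply X v"
  "endo_apply X (u - v) = endo_apply X u - endo_apply X v"
  "endo_apply X (- v) = - endo_apply X v"
  by (simp_all add: endo_apply_def blinfun.scaleR_right blinfun.add_right
      blinfun.diff_right blinfun.minus_right)

lemma norm_endo_apply: "norm (endo_apply X v) \<le> norm X * norm v"
  by (simp add: endo_apply_def norm_endo.rep_eq norm_blinfun)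

lemma bounded_linear_endo_apply: "bounded_linear (endo_apply X)"
  unfolding endo_apply_def[abs_def] by (rule blinfun.bounded_linear_right)

lemma bounded_linear_endo_apply_left: "bounded_linear (\<lambda>X. endo_apply X v)"
  by (rule bounded_linear_intro[where K="norm v"]) (auto simp: norm_endo_apply)

lemma endo_eqI: "(\<And>v. endo_apply X v = endo_apply Y v) \<Longrightarrow> X = Y"
  by (metis Rep_endo_inject endo_apply_def blinfun_eqI)

lemma endo_of_matrix_mult: "endo_of_matrix (A ** B) = endo_of_matrix A * endo_of_matrix B"
  by (rule endo_eqI) (simp add: matrix_vector_mul_assoc)

lemma endo_of_matrix_one: "endo_of_matrix (mat 1) = 1"
  by (rule endo_eqI) simp

lemma endo_of_matrix_scaleR: "endo_of_matrix (c *\<^sub>R A) = c *\<^sub>R endo_of_matrix A"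
  by (rule endo_eqI) (simp add: scaleR_matrix_vector_assoc)

lemma endo_of_matrix_add: "endo_of_matrix (A + B) = endo_of_matrix A + endo_of_matrix B"
  by (rule endo_eqI) (simp add: matrix_vector_mult_add_rdistrib)

lemma endo_of_matrix_mpow: "endo_of_matrix (mpow A k) = endo_of_matrix A ^ k"
  by (induct k) (simp_all add: endo_of_matrix_mult endo_of_matrix_one)

lemma matrix_of_endo_of_matrix: "matrix_of_endo (endo_of_matrix A) = A"
proof -
  have "endo_apply (endo_of_matrix A) = (*v) A" by (rule ext) simp
  thus ?thesis by (simp add: matrix_of_endo_def matrix_of_matrix_vector_mul)
qed

lemma matrix_of_endo_nth: "matrix_of_endo X $ i $ j = endo_apply X (axis j 1) $ i"
  by (simp add: matrix_of_endo_def matrix_def)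

lemma matrix_of_endo_mult_vec: "matrix_of_endo X *v v = endo_apply X v"
  unfolding matrix_of_endo_def
  by (rule matrix_works)
     (simp add: linear_matrix_vector_mul_eq linear_conv_bounded_linear bounded_linear_endo_apply)

lemma bounded_linear_matrix_of_endo: "bounded_linear (matrix_of_endo :: 'n::finite endo \<Rightarrow> _)"
proof (rule bounded_linear_intro[where K="real CARD('n) * real CARD('n)"])
  fix X Y :: "'n endo" and c :: real
  show "matrix_of_endo (X + Y) = matrix_of_endo X + matrix_of_endo Y"
    by (simp add: vec_eq_iff matrix_of_endo_nth)
  show "matrix_of_endo (c *\<^sub>R X) = c *\<^sub>R matrix_of_endo X"
    by (simp add: vec_eq_iff matrix_of_endo_nth)
  have entry: "\<bar>matrix_of_endo X $ i $ j\<bar> \<le> norm X" for i j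
    using component_le_norm_cart[of "endo_apply X (axis j 1)" i] norm_endo_apply[of X "axis j 1"]
    by (simp add: matrix_of_endo_nth)
  have "norm (matrix_of_endo X) \<le> (\<Sum>i\<in>UNIV. norm (matrix_of_endo X $ i))"
    by (simp add: norm_vec_def L2_set_le_sum)
  also have "\<dots> \<le> (\<Sum>i\<in>(UNIV::'n set). \<Sum>j\<in>UNIV. \<bar>matrix_of_endo X $ i $ j\<bar>)"
    by (intro sum_mono norm_le_l1_cart)
  also have "\<dots> \<le> (\<Sum>i\<in>(UNIV::'n set). \<Sum>j\<in>(UNIV::'n set). norm X)"
    by (intro sum_mono entry)
  also have "\<dots> = norm X * (real CARD('n) * real CARD('n))" by simp
  finally show "norm (matrix_of_endo X) \<le> norm X * (real CARD('n) * real CARD('n))" .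
qed

lemma mexp_eq_matrix_of_endo_exp:
  fixes A :: "real^'n::finite^'n"
  shows "mexp A = matrix_of_endo (exp (endo_of_matrix A))"
proof -
  have "matrix_of_endo (exp (endo_of_matrix A))
      = (\<Sum>k. matrix_of_endo (endo_of_matrix A ^ k /\<^sub>R fact k))"
    using bounded_linear.suminf[OF bounded_linear_matrix_of_endo summable_exp_generic]
    by (simp add: exp_def)
  also have "\<dots> = (\<Sum>k. (1 / fact k) *\<^sub>R mpow A k)"
    by (simp add: endo_of_matrix_mpow inverse_eq_divide
        flip: endo_of_matrix_scaleR endo_of_matrix_mpow add: matrix_of_endo_of_matrix)
  finally show ?thesis by (simp add: mexp_def)
qed

lemma mexp_mult_vec: "mexp A *v v = endo_apply (exp (endo_of_matrix A)) v"
  by (simp add: mexp_eq_matrix_of_endo_exp matrix_of_endo_mult_vec)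

section \<open>The affine semigroups S_q\<close>

lemma exp_scaleR_add:
  fixes X :: "'a::{banach,real_normed_algebra_1}"
  shows "exp ((s + t) *\<^sub>R X) = exp (s *\<^sub>R X) * exp (t *\<^sub>R X)"
  by (simp add: scaleR_add_left exp_add_commuting)

lemma endo_apply_exp: "endo_apply (exp Y) v = (\<Sum>k. endo_apply (Y ^ k /\<^sub>R fact k) v)"
  unfolding exp_def
  using bounded_linear.suminf[OF bounded_linear_endo_apply_left summable_exp_generic] by simp

lemma summable_endo_apply_exp: "summable (\<lambda>k. endo_apply (Y ^ k /\<^sub>R fact k) v)"
  by (rule bounded_linear.summable[OF bounded_linear_endo_apply_left summable_exp_generic])

lemma nonneg_matrix_mult_vec_nonneg:
  "(\<forall>i j. 0 \<le> B $ i $ j) \<Longrightarrow> 0 \<le> v \<Longrightarrow> 0 \<le> B *v (v :: real^'n::finite)"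
  by (auto simp: less_eq_vec_def matrix_vector_mult_def intro!: sum_nonneg)

lemma exp_nonneg_matrix_nonneg:
  assumes B: "\<forall>i j. 0 \<le> B $ i $ j" and t: "0 \<le> t" and v: "0 \<le> v"
  shows "0 \<le> endo_apply (exp (t *\<^sub>R endo_of_matrix B)) (v :: real^'n::finite)"
proof -
  let ?g = "\<lambda>k. endo_apply ((t *\<^sub>R endo_of_matrix B) ^ k /\<^sub>R fact k) v"
  have pow: "0 \<le> endo_apply (endo_of_matrix B ^ k) v" for k
    using v by (induct k) (simp_all add: nonneg_matrix_mult_vec_nonneg[OF B])
  have "?g k = (t ^ k / fact k) *\<^sub>R endo_apply (endo_of_matrix B ^ k) v" for k
    by (simp add: divide_inverse_commute)
  hence terms: "0 \<le> ?g k $ i" for k i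
    using pow[of k] t by (simp add: less_eq_vec_def)
  have "(\<Sum>k. ?g k) $ i = (\<Sum>k. ?g k $ i)" for i
    by (rule bounded_linear.suminf[OF bounded_linear_vec_nth summable_endo_apply_exp])
  moreover have "0 \<le> (\<Sum>k. ?g k $ i)" for i
    by (rule suminf_nonneg[OF bounded_linear.summable[OF bounded_linear_vec_nth summable_endo_apply_exp]])
       (rule terms)
  ultimately show ?thesis
    by (simp add: endo_apply_exp less_eq_vec_def)
qed

text \<open>Shifting q by a multiple c of the identity makes it entrywise nonnegative, and
  e^{tq} = e^{-tc} e^{t(q + c I)}.\<close>
lemma Q_matrix_exp_nonneg:
  assumes q: "is_Q_matrix q" and t: "0 \<le> t" and v: "0 \<le> v"
  shows "0 \<le> endo_apply (exp (t *\<^sub>R endo_of_matrix q)) (v :: real^'n::finite)"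
proof -
  define c where "c = (\<Sum>i\<in>UNIV. \<bar>q $ i $ i\<bar>)"
  define B where "B = q + c *\<^sub>R mat 1"
  have B: "\<forall>i j. 0 \<le> B $ i $ j"
  proof (intro allI)
    fix i j
    have "\<bar>q $ i $ i\<bar> \<le> c" unfolding c_def by (rule member_le_sum) auto
    thus "0 \<le> B $ i $ j"
      using q by (cases "i = j") (auto simp: B_def mat_def is_Q_matrix_def)
  qed
  have "exp (t *\<^sub>R endo_of_matrix q) = exp (t *\<^sub>R endo_of_matrix B + (- (t * c)) *\<^sub>R 1)"
    by (simp add: B_def endo_of_matrix_add endo_of_matrix_scaleR endo_of_matrix_one algebra_simps)
  also have "\<dots> = exp (t *\<^sub>R endo_of_matrix B) * exp ((- (t * c)) *\<^sub>R 1)"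
    by (rule exp_add_commuting) simp
  also have "exp ((- (t * c)) *\<^sub>R 1) = exp (- (t * c)) *\<^sub>R (1 :: 'n endo)"
    using exp_of_real[of "- (t * c)", where 'a="'n endo"] by (simp add: of_real_def)
  finally have "endo_apply (exp (t *\<^sub>R endo_of_matrix q)) v
      = exp (- (t * c)) *\<^sub>R endo_apply (exp (t *\<^sub>R endo_of_matrix B)) v"
    by simp
  thus ?thesis
    using exp_nonneg_matrix_nonneg[OF B t v] by (simp add: less_eq_vec_def)
qed

lemma Q_matrix_mult_vec_const: "is_Q_matrix q \<Longrightarrow> q *v vec c = 0"
  by (simp add: is_Q_matrix_def vec_eq_iff matrix_vector_mult_def sum_distrib_right[symmetric])

lemma endo_apply_exp_fixed:
  assumes "endo_apply Y w = 0"
  shows "endo_apply (exp Y) w = w"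
proof -
  have "endo_apply (Y ^ k /\<^sub>R fact k) w = (if k = 0 then w else 0)" for k
    using assms by (cases k) (simp_all del: power_Suc add: power_Suc2)
  moreover have "(\<lambda>k. if k = 0 then w else 0) sums w"
    using sums_single[of 0 "\<lambda>_. w"] by simp
  ultimately show ?thesis by (simp add: endo_apply_exp sums_iff)
qed

lemma Q_matrix_exp_const:
  "is_Q_matrix q \<Longrightarrow> endo_apply (exp (t *\<^sub>R endo_of_matrix q)) (vec c) = vec c"
  by (rule endo_apply_exp_fixed) (simp add: Q_matrix_mult_vec_const)

lemma continuous_on_endo_apply_exp: "continuous_on S (\<lambda>s. endo_apply (exp (s *\<^sub>R X)) w)"
proof -
  have "isCont (\<lambda>s. exp (s *\<^sub>R X)) s" for s
    using exp_scaleR_has_vector_derivative_right[where t=s and A=X and T=UNIV]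
    by (rule has_vector_derivative_continuous)
  hence "continuous_on S (\<lambda>s. exp (s *\<^sub>R X))"
    by (simp add: continuous_at_imp_continuous_on)
  thus ?thesis by (rule bounded_linear.continuous_on[OF bounded_linear_endo_apply_left])
qed

lemma integrable_endo_apply_exp: "(\<lambda>s. endo_apply (exp (s *\<^sub>R X)) w) integrable_on {a..b}"
  by (rule integrable_continuous_interval[OF continuous_on_endo_apply_exp])

lemma Sq_eq_endo:
  "Sq f q t u = endo_apply (exp (t *\<^sub>R endo_of_matrix q)) u
     + integral {0..t} (\<lambda>s. endo_apply (exp (s *\<^sub>R endo_of_matrix q)) (f q))"
  by (simp add: Sq_def mexp_mult_vec endo_of_matrix_scaleR)

lemma Sq_0 [simp]: "Sq f q 0 u = u"
  by (simp add: Sq_eq_endo)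

lemma Sq_add:
  assumes s: "0 \<le> s" and t: "0 \<le> t"
  shows "Sq f q (s + t) u = Sq f q s (Sq f q t u)"
proof -
  define X where "X = endo_of_matrix q"
  define g where "g = (\<lambda>r. endo_apply (exp (r *\<^sub>R X)) (f q))"
  have int: "g integrable_on {a..b}" for a b
    unfolding g_def by (rule integrable_endo_apply_exp)
  have "endo_apply (exp (s *\<^sub>R X)) (integral {0..t} g)
      = integral {0..t} (endo_apply (exp (s *\<^sub>R X)) \<circ> g)"
    by (rule integral_linear[OF int bounded_linear_endo_apply, symmetric])
  also have "endo_apply (exp (s *\<^sub>R X)) \<circ> g = g \<circ> (+) s"
    by (rule ext) (simp add: g_def exp_scaleR_add)
  also have "integral {0..t} (g \<circ> (+) s) = integral {s..s + t} g"
    using integral_shift_Icc_real[of 0 t g s] by (simp add: add.commute)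
  finally have shifted: "endo_apply (exp (s *\<^sub>R X)) (integral {0..t} g) = integral {s..s + t} g" .
  have combined: "integral {0..s} g + integral {s..s + t} g = integral {0..s + t} g"
    by (rule Henstock_Kurzweil_Integration.integral_combine) (use s t int in auto)
  have "endo_apply (exp ((s + t) *\<^sub>R X)) u = endo_apply (exp (s *\<^sub>R X)) (endo_apply (exp (t *\<^sub>R X)) u)"
    by (simp only: exp_scaleR_add endo_apply_mult)
  thus ?thesis
    unfolding Sq_eq_endo X_def[symmetric] g_def[symmetric] endo_apply_linear_simps
      shifted combined[symmetric]
    by (simp only: add_ac)
qed

lemma Sq_mono:
  assumes "is_Q_matrix q" "0 \<le> t" "u \<le> v"
  shows "Sq f q t u \<le> Sq f q t v"
proof -
  have "0 \<le> endo_apply (exp (t *\<^sub>R endo_of_matrix q)) (v - u)"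
    using assms by (intro Q_matrix_exp_nonneg) (simp_all add: less_eq_vec_def)
  thus ?thesis by (simp add: Sq_eq_endo less_eq_vec_def)
qed

lemma Sq_add_const: "is_Q_matrix q \<Longrightarrow> Sq f q t (u + vec c) = Sq f q t u + vec c"
  by (simp add: Sq_eq_endo Q_matrix_exp_const algebra_simps)

lemma Sq_affine:
  "Sq f q t (a *\<^sub>R u + (1 - a) *\<^sub>R v) = a *\<^sub>R Sq f q t u + (1 - a) *\<^sub>R Sq f q t v"
  by (simp add: Sq_eq_endo algebra_simps)

lemma Sq_zero_nonpos:
  assumes q: "is_Q_matrix q" and t: "0 \<le> t" and fq: "f q \<le> 0"
  shows "Sq f q t 0 \<le> 0"
proof -
  define g where "g = (\<lambda>r. endo_apply (exp (r *\<^sub>R endo_of_matrix q)) (- f q))"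
  have int: "g integrable_on {0..t}"
    unfolding g_def by (rule integrable_endo_apply_exp)
  have "0 \<le> g r" if "r \<in> {0..t}" for r
    unfolding g_def using that fq by (intro Q_matrix_exp_nonneg[OF q]) auto
  hence "0 \<le> integral {0..t} (\<lambda>r. g r $ i)" for i
    by (intro integral_nonneg)
       (auto simp: less_eq_vec_def intro: integrable_linear[OF int bounded_linear_vec_nth, unfolded o_def])
  hence "0 \<le> integral {0..t} g"
    using int by (simp add: less_eq_vec_def)
  moreover have "integral {0..t} g = - Sq f q t 0"
    unfolding g_def Sq_eq_endo by simp
  ultimately show ?thesis by simp
qed

lemma Sq_zero_of_zero_drift: "f q = 0 \<Longrightarrow> Sq f q t 0 = 0"
  by (simp add: Sq_eq_endo)

lemma vsup_upper_bdd:
  "v \<in> A \<Longrightarrow> (\<And>i. bdd_above ((\<lambda>w. w $ i) ` A)) \<Longrightarrow> v \<le> vsup A"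
  unfolding less_eq_vec_def vsup_def by (auto intro: cSUP_upper)

lemma vsup_upper: "v \<in> A \<Longrightarrow> (\<And>w. w \<in> A \<Longrightarrow> w \<le> b) \<Longrightarrow> v \<le> vsup A"
  by (rule vsup_upper_bdd) (auto simp: less_eq_vec_def intro!: bdd_aboveI[where M="b $ _"])

lemma vsup_least: "A \<noteq> {} \<Longrightarrow> (\<And>w. w \<in> A \<Longrightarrow> w \<le> b) \<Longrightarrow> vsup A \<le> b"
  unfolding less_eq_vec_def vsup_def by (auto intro!: cSUP_least)

lemma vsup_approx:
  assumes "A \<noteq> {}" "\<And>w. w \<in> A \<Longrightarrow> w \<le> b" "0 < e"
  obtains w where "w \<in> A" "vsup A $ i < w $ i + e"
proof -
  have "bdd_above ((\<lambda>w. w $ i) ` A)"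
    using assms(2) by (auto simp: less_eq_vec_def intro!: bdd_aboveI[where M="b $ i"])
  moreover have "vsup A $ i - e < (SUP w\<in>A. w $ i)"
    using assms(3) by (simp add: vsup_def)
  ultimately obtain w where "w \<in> A" "vsup A $ i - e < w $ i"
    using less_cSUP_iff[OF assms(1)] by blast
  thus ?thesis using that by force
qed

lemma vsup_singleton [simp]: "vsup {v} = v"
  by (simp add: vsup_def vec_eq_iff)

lemma vec_le_epsilon: "(\<And>e. 0 < e \<Longrightarrow> u \<le> v + vec e) \<Longrightarrow> (u :: real^'n) \<le> v"
  unfolding less_eq_vec_def by (auto intro: field_le_epsilon)

lemma convex_combination_mono:
  "0 \<le> a \<Longrightarrow> a \<le> 1 \<Longrightarrow> (x :: real^'n) \<le> x' \<Longrightarrow> y \<le> y' \<Longrightarrow>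
    a *\<^sub>R x + (1 - a) *\<^sub>R y \<le> a *\<^sub>R x' + (1 - a) *\<^sub>R y'"
  by (simp add: less_eq_vec_def add_mono mult_left_mono)

lemma is_convex_mapI:
  assumes "\<And>u v a. 0 \<le> a \<Longrightarrow> a \<le> 1 \<Longrightarrow>
    T (a *\<^sub>R u + (1 - a) *\<^sub>R v) \<le> a *\<^sub>R T u + (1 - a) *\<^sub>R T v"
  shows "is_convex_map T"
  unfolding is_convex_map_def convex_on_def
proof (intro allI conjI ballI impI convex_UNIV)
  fix i u v and a b :: real
  assume "0 \<le> a" "0 \<le> b" "a + b = 1"
  then have "b = 1 - a" "a \<le> 1" by auto
  thus "T (a *\<^sub>R u + b *\<^sub>R v) $ i \<le> a * T u $ i + b * T v $ i"
    using assms[of a u v] \<open>0 \<le> a\<close> by (simp add: less_eq_vec_def)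
qed

definition vmax :: "real^'n::finite \<Rightarrow> real" where
  "vmax u = Max (range (\<lambda>i. u $ i))"

lemma le_vec_vmax: "u \<le> vec (vmax u)"
  by (simp add: less_eq_vec_def vmax_def)

section \<open>Partitions as sorted grids\<close>

definition grids :: "real \<Rightarrow> real list set" where
  "grids t = {xs. sorted_wrt (<) xs \<and> xs \<noteq> [] \<and> hd xs = 0 \<and> last xs = t}"

lemma sorted_wrt_grids: "xs \<in> grids t \<Longrightarrow> sorted_wrt (<) xs"
  by (simp add: grids_def)

lemma sorted_wrt_less_hd_le: "sorted_wrt (<) xs \<Longrightarrow> x \<in> set xs \<Longrightarrow> hd xs \<le> (x :: real)"
  by (cases xs) auto

lemma sorted_wrt_less_le_last:
  "sorted_wrt (<) xs \<Longrightarrow> x \<in> set xs \<Longrightarrow> x \<le> last (xs :: real list)"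
  by (induction xs) (auto, meson last_in_set less_imp_le)

lemma Ecomp_append: "Ecomp P f (xs @ [a]) \<circ> Ecomp P f (a # ys) = Ecomp P f (xs @ a # ys)"
  by (induction xs rule: induct_list012) (simp_all add: fun_eq_iff)

lemma Ecomp_shift: "Ecomp P f (map (\<lambda>r. r + c) xs) = Ecomp P f xs"
  by (induction P f xs rule: Ecomp.induct) simp_all

lemma grid_partition:
  assumes "xs \<in> grids t"
  shows "set xs \<in> partitions t" "sorted_list_of_set (set xs) = xs"
proof -
  have sorted: "sorted_wrt (<) xs" and "xs \<noteq> []" "hd xs = 0" "last xs = t"
    using assms by (auto simp: grids_def)
  moreover have "Max (set xs) = t"
    using sorted_wrt_less_le_last[OF sorted] \<open>xs \<noteq> []\<close> \<open>last xs = t\<close> by (intro Max_eqI) auto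
  ultimately show "set xs \<in> partitions t"
    using sorted_wrt_less_hd_le[OF sorted] hd_in_set[of xs] by (auto simp: partitions_def)
  show "sorted_list_of_set (set xs) = xs"
    using sorted by (simp add: sorted_list_of_set.idem_if_sorted_distinct strict_sorted_iff)
qed

lemma partition_grid:
  assumes "A \<in> partitions t"
  shows "sorted_list_of_set A \<in> grids t" "set (sorted_list_of_set A) = A"
proof -
  let ?xs = "sorted_list_of_set A"
  have A: "finite A" "A \<subseteq> {0..}" "0 \<in> A" "Max A = t"
    using assms by (auto simp: partitions_def)
  show set_eq: "set ?xs = A" using A by simp
  have sorted: "sorted_wrt (<) ?xs" by (rule strict_sorted_list_of_set)
  have ne: "?xs \<noteq> []" using set_eq A(3) by auto
  have "hd ?xs \<in> A" "last ?xs \<in> A"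
    using hd_in_set[OF ne] last_in_set[OF ne] unfolding set_eq .
  moreover have "hd ?xs \<le> 0"
    using sorted_wrt_less_hd_le[OF sorted, of 0] set_eq A(3) by simp
  moreover have "t \<le> last ?xs"
    using sorted_wrt_less_le_last[OF sorted, of t] set_eq Max_in[OF A(1)] A(3,4) by auto
  ultimately have "hd ?xs = 0" "last ?xs = t"
    using A(2,4) Max_ge[OF A(1)] by (auto intro: antisym)
  thus "?xs \<in> grids t" using sorted ne by (simp add: grids_def)
qed

lemma grids_0: "grids 0 = {[0]}"
proof -
  have "xs = [0]" if "xs \<in> grids 0" for xs
  proof -
    have "set xs = {0}"
      using grid_partition(1)[OF that] Max_ge[of "set xs"] unfolding partitions_def by fastforce
    thus ?thesis using grid_partition(2)[OF that] by simp
  qed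
  thus ?thesis by (auto simp: grids_def)
qed

lemma grids_nonempty: "0 \<le> t \<Longrightarrow> grids t \<noteq> {}"
proof (cases "t = 0")
  case False
  moreover assume "0 \<le> t"
  ultimately have "[0, t] \<in> grids t" by (simp add: grids_def)
  thus ?thesis by blast
qed (simp add: grids_0)

lemma Ecomp_grids_append:
  assumes xs: "xs \<in> grids s" and ys: "ys \<in> grids t"
  shows "xs @ tl (map (\<lambda>r. r + s) ys) \<in> grids (s + t)"
    and "Ecomp P f (xs @ tl (map (\<lambda>r. r + s) ys)) = Ecomp P f xs \<circ> Ecomp P f ys"
proof -
  have sx: "sorted_wrt (<) xs" "xs \<noteq> []" "hd xs = 0" "last xs = s"
    and sy: "sorted_wrt (<) ys" "ys \<noteq> []" "hd ys = 0" "last ys = t"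
    using xs ys by (auto simp: grids_def)
  obtain ys' where ys': "ys = 0 # ys'" using sy by (cases ys) auto
  have xs_snoc: "xs = butlast xs @ [s]" using sx by (metis append_butlast_last_id)
  have joined: "xs @ tl (map (\<lambda>r. r + s) ys) = butlast xs @ s # map (\<lambda>r. r + s) ys'"
    by (subst xs_snoc) (simp add: ys')
  have "Ecomp P f (butlast xs @ s # map (\<lambda>r. r + s) ys')
      = Ecomp P f xs \<circ> Ecomp P f (map (\<lambda>r. r + s) ys)"
    using Ecomp_append[of P f "butlast xs" s] xs_snoc by (simp add: ys')
  thus "Ecomp P f (xs @ tl (map (\<lambda>r. r + s) ys)) = Ecomp P f xs \<circ> Ecomp P f ys"
    by (simp add: joined Ecomp_shift)
  have "\<forall>r\<in>set ys'. 0 < r" using sy ys' by simp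
  moreover have "\<forall>x\<in>set xs. x \<le> s" using sorted_wrt_less_le_last[OF sx(1)] sx by simp
  ultimately have "sorted_wrt (<) (xs @ tl (map (\<lambda>r. r + s) ys))"
    using sx sy ys' by (force simp: sorted_wrt_append sorted_wrt_map)
  moreover have "last (xs @ tl (map (\<lambda>r. r + s) ys)) = s + t"
    using sx sy ys' by (cases ys') (auto simp: last_map)
  ultimately show "xs @ tl (map (\<lambda>r. r + s) ys) \<in> grids (s + t)"
    using sx by (simp add: grids_def)
qed

lemma Ecomp_grids_split:
  assumes zs: "zs \<in> grids (s + t)" and s: "s \<in> set zs"
  obtains xs ys where "xs \<in> grids s" "ys \<in> grids t" "Ecomp P f zs = Ecomp P f xs \<circ> Ecomp P f ys"
proof -
  have sz: "sorted_wrt (<) zs" "hd zs = 0" "last zs = s + t"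
    using zs by (auto simp: grids_def)
  obtain l1 l2 where zs_split: "zs = l1 @ s # l2" using split_list[OF s] by blast
  define xs where "xs = l1 @ [s]"
  define ys where "ys = map (\<lambda>r. r - s) (s # l2)"
  have "map (\<lambda>r. r + s) ys = s # l2" by (simp add: ys_def comp_def)
  hence "Ecomp P f zs = Ecomp P f xs \<circ> Ecomp P f ys"
    by (metis Ecomp_append Ecomp_shift xs_def zs_split)
  moreover have "xs \<in> grids s"
    using sz zs_split by (cases l1) (auto simp: grids_def xs_def sorted_wrt_append)
  moreover have "ys \<in> grids t"
    using sz zs_split by (cases "l2 = []") (auto simp: grids_def ys_def sorted_wrt_append sorted_wrt_map last_map)
  ultimately show ?thesis using that by blast
qed

lemma grids_common_refinement:
  assumes "finite I" "I \<noteq> {}" "\<And>i. i \<in> I \<Longrightarrow> xs i \<in> grids t"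
  obtains zs where "zs \<in> grids t" "\<And>i. i \<in> I \<Longrightarrow> set (xs i) \<subseteq> set zs"
proof -
  define A where "A = (\<Union>i\<in>I. set (xs i))"
  have parts: "set (xs i) \<in> partitions t" if "i \<in> I" for i
    using grid_partition(1)[OF assms(3)[OF that]] .
  have "finite A" "A \<subseteq> {0..}" "0 \<in> A"
    using parts assms(1,2) by (auto simp: A_def partitions_def)
  moreover have "Max A = t"
  proof (rule Max_eqI[OF \<open>finite A\<close>])
    show "y \<le> t" if "y \<in> A" for y
      using that assms(3) sorted_wrt_less_le_last by (fastforce simp: A_def grids_def)
    obtain i where "i \<in> I" using assms(2) by blast
    thus "t \<in> A" using assms(3)[of i] last_in_set by (fastforce simp: A_def grids_def)
  qed
  ultimately have "A \<in> partitions t" by (simp add: partitions_def)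
  thus ?thesis using that partition_grid[of A t] by (auto simp: A_def)
qed

lemma grids_refinement_insert:
  assumes "xs \<in> grids t" "0 \<le> s" "s \<le> t"
  obtains zs where "zs \<in> grids t" "set xs \<subseteq> set zs" "s \<in> set zs"
proof -
  have part: "set xs \<in> partitions t" by (rule grid_partition(1)[OF assms(1)])
  hence "Max (insert s (set xs)) = max s t"
    by (subst Max_insert) (auto simp: partitions_def)
  hence "insert s (set xs) \<in> partitions t"
    using part assms(2,3) by (simp add: partitions_def max_def)
  thus ?thesis using that partition_grid[of "insert s (set xs)" t] by auto
qed

section \<open>The operators E_h and their compositions\<close>

locale nisio_setting =
  fixes P :: "(real^'n::finite^'n) set" and f :: "real^'n^'n \<Rightarrow> real^'n" and q0 :: "real^'n^'n"
  assumes Q_matrices: "\<And>q. q \<in> P \<Longrightarrow> is_Q_matrix q"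
    and q0: "q0 \<in> P" and drift_q0: "f q0 = 0"
    and drift_nonpos: "\<And>q. q \<in> P \<Longrightarrow> f q \<le> 0"
begin

lemma Sq_const_le: "q \<in> P \<Longrightarrow> 0 \<le> h \<Longrightarrow> Sq f q h (vec c) \<le> vec c"
  using Sq_add_const[of q f h 0 c] Sq_zero_nonpos[of q h f] Q_matrices drift_nonpos
  by (simp add: less_eq_vec_def)

lemma Sq_le_vmax: "q \<in> P \<Longrightarrow> 0 \<le> h \<Longrightarrow> Sq f q h u \<le> vec (vmax u)"
  by (meson Q_matrices Sq_mono le_vec_vmax Sq_const_le order_trans)

lemma Eh_upper: "q \<in> P \<Longrightarrow> 0 \<le> h \<Longrightarrow> Sq f q h u \<le> Eh P f h u"
  unfolding Eh_def by (rule vsup_upper) (auto intro: Sq_le_vmax)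

lemma Eh_least: "(\<And>q. q \<in> P \<Longrightarrow> Sq f q h u \<le> w) \<Longrightarrow> Eh P f h u \<le> w"
  unfolding Eh_def by (rule vsup_least) (use q0 in auto)

lemma Eh_mono: "0 \<le> h \<Longrightarrow> u \<le> v \<Longrightarrow> Eh P f h u \<le> Eh P f h v"
  by (rule Eh_least) (meson Eh_upper Q_matrices Sq_mono order_trans)

lemma Eh_add_const: "0 \<le> h \<Longrightarrow> Eh P f h (u + vec c) = Eh P f h u + vec c"
proof (rule antisym)
  assume h: "0 \<le> h"
  show "Eh P f h (u + vec c) \<le> Eh P f h u + vec c"
    by (rule Eh_least) (simp add: Sq_add_const Q_matrices Eh_upper h add_right_mono)
  have "Eh P f h u \<le> Eh P f h (u + vec c) - vec c"
  proof (rule Eh_least)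
    fix q assume q: "q \<in> P"
    have "Sq f q h u = Sq f q h (u + vec c) - vec c"
      using Sq_add_const[OF Q_matrices[OF q]] by simp
    also have "\<dots> \<le> Eh P f h (u + vec c) - vec c"
      using Eh_upper[OF q h, of "u + vec c"] by (simp add: less_eq_vec_def)
    finally show "Sq f q h u \<le> Eh P f h (u + vec c) - vec c" .
  qed
  thus "Eh P f h u + vec c \<le> Eh P f h (u + vec c)"
    by (simp add: less_eq_vec_def le_diff_eq)
qed

lemma Eh_const: "0 \<le> h \<Longrightarrow> Eh P f h (vec c) = vec c"
proof (rule antisym)
  assume h: "0 \<le> h"
  show "Eh P f h (vec c) \<le> vec c" by (rule Eh_least) (rule Sq_const_le[OF _ h])
  have "Sq f q0 h (vec c) = vec c"
    using Sq_add_const[OF Q_matrices[OF q0], of f h 0 c] Sq_zero_of_zero_drift[of f q0, OF drift_q0] by simp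
  thus "vec c \<le> Eh P f h (vec c)" using Eh_upper[OF q0 h, of "vec c"] by simp
qed

lemma Eh_0: "Eh P f 0 u = u"
  using Eh_least[of 0 u u] Eh_upper[OF q0, of 0 u] by (simp add: antisym)

lemma Eh_add_le: "0 \<le> a \<Longrightarrow> 0 \<le> b \<Longrightarrow> Eh P f (a + b) u \<le> Eh P f a (Eh P f b u)"
proof (rule Eh_least)
  fix q assume a: "0 \<le> a" and b: "0 \<le> b" and q: "q \<in> P"
  have "Sq f q (a + b) u = Sq f q a (Sq f q b u)" by (rule Sq_add[OF a b])
  also have "\<dots> \<le> Sq f q a (Eh P f b u)" by (rule Sq_mono[OF Q_matrices[OF q] a Eh_upper[OF q b]])
  also have "\<dots> \<le> Eh P f a (Eh P f b u)" by (rule Eh_upper[OF q a])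
  finally show "Sq f q (a + b) u \<le> Eh P f a (Eh P f b u)" .
qed

lemma Eh_convex: "0 \<le> h \<Longrightarrow> 0 \<le> a \<Longrightarrow> a \<le> 1 \<Longrightarrow>
    Eh P f h (a *\<^sub>R u + (1 - a) *\<^sub>R v) \<le> a *\<^sub>R Eh P f h u + (1 - a) *\<^sub>R Eh P f h v"
  by (rule Eh_least) (simp add: Sq_affine convex_combination_mono Eh_upper)

lemma Ecomp_mono: "sorted_wrt (<) xs \<Longrightarrow> u \<le> v \<Longrightarrow> Ecomp P f xs u \<le> Ecomp P f xs v"
  by (induction xs rule: induct_list012) (auto intro!: Eh_mono)

lemma Ecomp_add_const: "sorted_wrt (<) xs \<Longrightarrow> Ecomp P f xs (u + vec c) = Ecomp P f xs u + vec c"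
  by (induction xs rule: induct_list012) (auto simp: Eh_add_const)

lemma Ecomp_const: "sorted_wrt (<) xs \<Longrightarrow> Ecomp P f xs (vec c) = vec c"
  by (induction xs rule: induct_list012) (auto simp: Eh_const)

lemma Ecomp_le_vmax: "sorted_wrt (<) xs \<Longrightarrow> Ecomp P f xs u \<le> vec (vmax u)"
  using Ecomp_mono[OF _ le_vec_vmax, of xs u] Ecomp_const[of xs "vmax u"] by simp

lemma Ecomp_convex:
  "sorted_wrt (<) xs \<Longrightarrow> 0 \<le> a \<Longrightarrow> a \<le> 1 \<Longrightarrow>
    Ecomp P f xs (a *\<^sub>R u + (1 - a) *\<^sub>R v) \<le> a *\<^sub>R Ecomp P f xs u + (1 - a) *\<^sub>R Ecomp P f xs v"
proof (induction xs rule: induct_list012)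
  case (3 x y zs)
  hence h: "0 \<le> y - x" by simp
  from 3 have "Ecomp P f (y # zs) (a *\<^sub>R u + (1 - a) *\<^sub>R v)
      \<le> a *\<^sub>R Ecomp P f (y # zs) u + (1 - a) *\<^sub>R Ecomp P f (y # zs) v"
    by simp
  from Eh_mono[OF h this] Eh_convex[OF h \<open>0 \<le> a\<close> \<open>a \<le> 1\<close>] show ?case
    by (simp add: order_trans)
qed simp_all

lemma Ecomp_drop_point:
  assumes "x < y" "y < z"
  shows "Ecomp P f (x # z # zs) u \<le> Ecomp P f (x # y # z # zs) u"
  using Eh_add_le[of "y - x" "z - y" "Ecomp P f (z # zs) u"] assms by simp

text \<open>Induction along ys: if the first step of xs jumps over the next point y1 of ys, that
  step is first split at y1.\<close>
lemma Ecomp_refine: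
  "sorted_wrt (<) ys \<Longrightarrow> sorted_wrt (<) xs \<Longrightarrow> xs \<noteq> [] \<Longrightarrow> hd xs = hd ys \<Longrightarrow>
    last xs = last ys \<Longrightarrow> set xs \<subseteq> set ys \<Longrightarrow> Ecomp P f xs u \<le> Ecomp P f ys u"
proof (induction ys arbitrary: xs)
  case (Cons y ys)
  then obtain xs' where xs: "xs = y # xs'" by (cases xs) auto
  have above_y: "\<forall>z\<in>set xs'. y < z" using Cons.prems(2) xs by simp
  show ?case
  proof (cases "ys = []")
    case True
    thus ?thesis using Cons.prems(6) above_y xs by (cases xs') auto
  next
    case False
    then obtain y1 ys' where ys: "ys = y1 # ys'" by (cases ys) auto
    have "xs' \<noteq> []"
      using Cons.prems(1,5) xs ys sorted_wrt_less_le_last[of "y1 # ys'" y1] by auto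
    then obtain x1 xs'' where xs': "xs' = x1 # xs''" by (cases xs') auto
    have sub: "set xs' \<subseteq> set ys" using Cons.prems(6) above_y xs by auto
    hence "y1 \<le> x1" using Cons.prems(1) ys xs' sorted_wrt_less_hd_le[of ys x1] by auto
    define zs where "zs = (if x1 = y1 then xs'' else xs')"
    have "Ecomp P f (y1 # zs) u \<le> Ecomp P f ys u"
      by (rule Cons.IH) (use Cons.prems \<open>y1 \<le> x1\<close> sub xs xs' ys in \<open>auto simp: zs_def\<close>)
    hence "Ecomp P f (y # y1 # zs) u \<le> Ecomp P f (y # ys) u"
      using Cons.prems(1) ys by (simp add: Eh_mono)
    moreover have "Ecomp P f xs u \<le> Ecomp P f (y # y1 # zs) u"
      using Ecomp_drop_point[of y y1 x1 xs'' u] Cons.prems(1) \<open>y1 \<le> x1\<close> xs xs' ys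
      by (auto simp: zs_def)
    ultimately show ?thesis by (meson order_trans)
  qed
qed simp

end

section \<open>The Nisio semigroup\<close>

context nisio_setting
begin

text \<open>The separate clause for \<pi> = {0} in the definition of Epi is redundant, as E_0 is the
  identity.\<close>
lemma Epi_eq_Ecomp: "Epi P f \<pi> = Ecomp P f (sorted_list_of_set \<pi>)"
  by (simp add: Epi_def fun_eq_iff Eh_0)

lemma nisio_eq_grids: "nisio P f t u = vsup ((\<lambda>xs. Ecomp P f xs u) ` grids t)"
proof -
  have "sorted_list_of_set ` partitions t = grids t"
    using partition_grid(1) grid_partition by (force intro: rev_image_eqI)
  moreover have "(\<lambda>\<pi>. Epi P f \<pi> u) ` partitions t
      = (\<lambda>xs. Ecomp P f xs u) ` sorted_list_of_set ` partitions t"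
    by (simp add: Epi_eq_Ecomp image_image)
  ultimately show ?thesis by (simp add: nisio_def)
qed

lemma Ecomp_refine_grids:
  "xs \<in> grids t \<Longrightarrow> zs \<in> grids t \<Longrightarrow> set xs \<subseteq> set zs \<Longrightarrow>
    Ecomp P f xs u \<le> Ecomp P f zs u"
  by (rule Ecomp_refine) (auto simp: grids_def)

lemma nisio_upper: "xs \<in> grids t \<Longrightarrow> Ecomp P f xs u \<le> nisio P f t u"
  unfolding nisio_eq_grids by (rule vsup_upper) (auto intro: Ecomp_le_vmax sorted_wrt_grids)

lemma nisio_least:
  "0 \<le> t \<Longrightarrow> (\<And>xs. xs \<in> grids t \<Longrightarrow> Ecomp P f xs u \<le> w) \<Longrightarrow> nisio P f t u \<le> w"
  unfolding nisio_eq_grids by (rule vsup_least) (use grids_nonempty in auto)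

text \<open>One grid serves all d components at once: a common refinement of the d grids that
  approximate the supremum componentwise.\<close>
lemma nisio_approx:
  assumes t: "0 \<le> t" and e: "0 < e"
  obtains zs where "zs \<in> grids t" "nisio P f t u \<le> Ecomp P f zs u + vec e"
proof -
  have "\<exists>xs. xs \<in> grids t \<and> nisio P f t u $ i < Ecomp P f xs u $ i + e" for i
  proof -
    have "(\<lambda>xs. Ecomp P f xs u) ` grids t \<noteq> {}" using grids_nonempty[OF t] by simp
    moreover have "w \<le> vec (vmax u)" if "w \<in> (\<lambda>xs. Ecomp P f xs u) ` grids t" for w
      using that Ecomp_le_vmax sorted_wrt_grids by blast
    ultimately obtain w where "w \<in> (\<lambda>xs. Ecomp P f xs u) ` grids t"
      and "vsup ((\<lambda>xs. Ecomp P f xs u) ` grids t) $ i < w $ i + e"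
      using vsup_approx[OF _ _ e] by metis
    thus ?thesis unfolding nisio_eq_grids by auto
  qed
  then obtain xs where xs: "\<And>i. xs i \<in> grids t"
    and approx: "\<And>i. nisio P f t u $ i < Ecomp P f (xs i) u $ i + e"
    by metis
  obtain zs where zs: "zs \<in> grids t" and sub: "\<And>i. set (xs i) \<subseteq> set zs"
    using grids_common_refinement[of UNIV xs t] xs by auto
  have refined: "Ecomp P f (xs i) u $ i \<le> Ecomp P f zs u $ i" for i
    using Ecomp_refine_grids[OF xs zs sub] by (simp add: less_eq_vec_def)
  have "nisio P f t u $ i \<le> (Ecomp P f zs u + vec e) $ i" for i
    using approx[of i] refined[of i] by simp
  hence "nisio P f t u \<le> Ecomp P f zs u + vec e"
    by (simp add: less_eq_vec_def)
  thus ?thesis using that zs by blast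
qed

lemma nisio_0: "nisio P f 0 u = u"
  by (simp add: nisio_eq_grids grids_0)

lemma nisio_mono: "0 \<le> t \<Longrightarrow> u \<le> v \<Longrightarrow> nisio P f t u \<le> nisio P f t v"
  by (rule nisio_least) (meson Ecomp_mono sorted_wrt_grids nisio_upper order_trans)+

lemma nisio_const: "0 \<le> t \<Longrightarrow> nisio P f t (vec c) = vec c"
proof (rule antisym)
  assume t: "0 \<le> t"
  show "nisio P f t (vec c) \<le> vec c"
    by (rule nisio_least[OF t]) (simp add: Ecomp_const sorted_wrt_grids)
  obtain xs where "xs \<in> grids t" using grids_nonempty[OF t] by blast
  thus "vec c \<le> nisio P f t (vec c)"
    using nisio_upper[of xs t "vec c"] Ecomp_const[OF sorted_wrt_grids] by simp
qed

lemma nisio_convex: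
  assumes t: "0 \<le> t" and a: "0 \<le> a" "a \<le> 1"
  shows "nisio P f t (a *\<^sub>R u + (1 - a) *\<^sub>R v) \<le> a *\<^sub>R nisio P f t u + (1 - a) *\<^sub>R nisio P f t v"
proof (rule nisio_least[OF t])
  fix xs assume xs: "xs \<in> grids t"
  have "Ecomp P f xs (a *\<^sub>R u + (1 - a) *\<^sub>R v) \<le> a *\<^sub>R Ecomp P f xs u + (1 - a) *\<^sub>R Ecomp P f xs v"
    by (rule Ecomp_convex[OF sorted_wrt_grids[OF xs] a])
  also have "\<dots> \<le> a *\<^sub>R nisio P f t u + (1 - a) *\<^sub>R nisio P f t v"
    by (rule convex_combination_mono[OF a nisio_upper[OF xs] nisio_upper[OF xs]])
  finally show "Ecomp P f xs (a *\<^sub>R u + (1 - a) *\<^sub>R v)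
      \<le> a *\<^sub>R nisio P f t u + (1 - a) *\<^sub>R nisio P f t v" .
qed

lemma nisio_add_le:
  assumes s: "0 \<le> s" and t: "0 \<le> t"
  shows "nisio P f (s + t) u \<le> nisio P f s (nisio P f t u)"
proof (rule nisio_least)
  fix zs assume zs: "zs \<in> grids (s + t)"
  obtain zs' where zs': "zs' \<in> grids (s + t)" "set zs \<subseteq> set zs'" "s \<in> set zs'"
    using grids_refinement_insert[OF zs s] t by auto
  obtain xs ys where xs: "xs \<in> grids s" and ys: "ys \<in> grids t"
    and split: "Ecomp P f zs' = Ecomp P f xs \<circ> Ecomp P f ys"
    using Ecomp_grids_split[OF zs'(1,3)] by blast
  have "Ecomp P f zs u \<le> Ecomp P f zs' u"
    by (rule Ecomp_refine_grids[OF zs zs'(1,2)])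
  also have "\<dots> \<le> Ecomp P f xs (nisio P f t u)"
    using Ecomp_mono[OF sorted_wrt_grids[OF xs] nisio_upper[OF ys]] split by simp
  also have "\<dots> \<le> nisio P f s (nisio P f t u)"
    by (rule nisio_upper[OF xs])
  finally show "Ecomp P f zs u \<le> nisio P f s (nisio P f t u)" .
qed (use s t in simp)

text \<open>The converse inequality needs the approximation of nisio by a single grid, and the
  commutation of the E_h with constant shifts to move the error e through.\<close>
lemma nisio_add_ge:
  assumes s: "0 \<le> s" and t: "0 \<le> t"
  shows "nisio P f s (nisio P f t u) \<le> nisio P f (s + t) u"
proof (rule nisio_least[OF s])
  fix xs assume xs: "xs \<in> grids s"
  show "Ecomp P f xs (nisio P f t u) \<le> nisio P f (s + t) u"
  proof (rule vec_le_epsilon)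
    fix e :: real assume "0 < e"
    then obtain ys where ys: "ys \<in> grids t" and approx: "nisio P f t u \<le> Ecomp P f ys u + vec e"
      using nisio_approx[OF t] by blast
    have "Ecomp P f xs (nisio P f t u) \<le> Ecomp P f xs (Ecomp P f ys u + vec e)"
      by (rule Ecomp_mono[OF sorted_wrt_grids[OF xs] approx])
    also have "\<dots> = Ecomp P f (xs @ tl (map (\<lambda>r. r + s) ys)) u + vec e"
      using Ecomp_grids_append(2)[OF xs ys, of P f] Ecomp_add_const[OF sorted_wrt_grids[OF xs]]
      by simp
    also have "\<dots> \<le> nisio P f (s + t) u + vec e"
      using nisio_upper[OF Ecomp_grids_append(1)[OF xs ys]] by (simp add: add_right_mono)
    finally show "Ecomp P f xs (nisio P f t u) \<le> nisio P f (s + t) u + vec e" .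
  qed
qed

lemma nisio_add: "0 \<le> s \<Longrightarrow> 0 \<le> t \<Longrightarrow> nisio P f (s + t) = nisio P f s \<circ> nisio P f t"
  by (simp add: fun_eq_iff antisym nisio_add_le nisio_add_ge)

lemma Sq_le_nisio: "0 \<le> t \<Longrightarrow> q \<in> P \<Longrightarrow> Sq f q t u \<le> nisio P f t u"
proof (cases "t = 0")
  case False
  moreover assume "0 \<le> t" "q \<in> P"
  ultimately have "[0, t] \<in> grids t" "Sq f q t u \<le> Eh P f t u"
    by (simp_all add: grids_def Eh_upper)
  thus ?thesis using nisio_upper[of "[0, t]" t u] by simp
qed (simp add: nisio_0)

lemma Ecomp_le_semigroup:
  assumes T: "is_semigroup T" "dominates P f T"
  shows "sorted_wrt (<) xs \<Longrightarrow> xs \<noteq> [] \<Longrightarrow> Ecomp P f xs u \<le> T (last xs - hd xs) u"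
proof (induction xs rule: induct_list012)
  case (2 x)
  thus ?case using T(1) by (simp add: is_semigroup_def)
next
  case (3 x y zs)
  define r where "r = last (y # zs) - y"
  have h: "0 \<le> y - x" and r: "0 \<le> r"
    using 3(3) sorted_wrt_less_le_last[of "y # zs" y] by (auto simp: r_def)
  have "Ecomp P f (x # y # zs) u \<le> Eh P f (y - x) (T r u)"
    using 3 h by (simp add: Eh_mono r_def)
  also have "\<dots> \<le> T (y - x) (T r u)"
    by (rule Eh_least) (use T(2) h in \<open>simp add: dominates_def\<close>)
  also have "\<dots> = T ((y - x) + r) u"
    using T(1) h r by (simp add: is_semigroup_def)
  finally show ?case by (simp add: r_def)
qed simp

lemma nisio_le_semigroup:
  assumes "is_semigroup T" "dominates P f T" "0 \<le> t"
  shows "nisio P f t u \<le> T t u"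
proof (rule nisio_least[OF assms(3)])
  fix xs assume "xs \<in> grids t"
  thus "Ecomp P f xs u \<le> T t u"
    using Ecomp_le_semigroup[OF assms(1,2), of xs u] by (simp add: grids_def)
qed

end

theorem mainTheorem8:
  fixes P :: "(real^'n^'n) set" and f :: "real^'n^'n \<Rightarrow> real^'n" and q0 :: "real^'n^'n"
  assumes Q: "\<forall>q\<in>P. is_Q_matrix q"
    and q0: "q0 \<in> P" and fq0: "f q0 = 0" and fsup: "vsup (f ` P) = 0"
    and fin: "\<forall>u. \<forall>i. bdd_above ((\<lambda>q. (q *v u + f q) $ i) ` P)"
  shows "is_semigroup (nisio P f)
    \<and> (\<forall>t\<ge>0. is_kernel (nisio P f t) \<and> is_convex_map (nisio P f t))
    \<and> is_semigroup_envelope P f (nisio P f)"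
proof -
  have "f q \<le> 0" if "q \<in> P" for q
  proof -
    have "bdd_above ((\<lambda>w. w $ i) ` f ` P)" for i
      using fin[rule_format, of 0 i] by (simp add: image_image)
    thus ?thesis using vsup_upper_bdd[of "f q" "f ` P"] that fsup by simp
  qed
  then interpret nisio_setting P f q0
    using Q q0 fq0 by unfold_locales auto
  have semigroup: "is_semigroup (nisio P f)"
    by (simp add: is_semigroup_def fun_eq_iff nisio_0 nisio_add)
  moreover have "is_kernel (nisio P f t) \<and> is_convex_map (nisio P f t)" if "0 \<le> t" for t
    using that by (auto simp: is_kernel_def nisio_mono nisio_const intro: is_convex_mapI nisio_convex)
  moreover have "is_semigroup_envelope P f (nisio P f)"
    using semigroup Sq_le_nisio nisio_le_semigroup
    by (auto simp: is_semigroup_envelope_def dominates_def)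
  ultimately show ?thesis by blast
qed

end
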